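(* Let $\mathcal H$ be a complex Hilbert space and $T\in\mathcal B(\mathcal H)$ left-invertible, with Cauchy dual $T'=T(T^*T)^{-1}$. The following are equivalent: (i) $\|T'T^*x\|\le\|T'Tx\|$ for all $x\in\mathcal H$; (ii) $T(T^*T)^{-1}T^*\le T^*(T^*T)^{-1}T$; (iii) $P_{\mathcal R(T)}\le T^*(T^*T)^{-1}T$; (iv) the restriction of $T'$ to its range $\mathcal R(T')$ is hyponormal. In particular, every concave operator is weakly concave.
   Context: $P_{\mathcal M}$ is the orthogonal projection onto a closed subspace $\mathcal M$; $\mathcal R(\cdot)$ is the range. An operator $A$ is hyponormal if $A^*A-AA^*\ge0$. $T$ is concave if $I-2T^*T+T^{*2}T^2\le0$. A left-invertible $T$ is weakly concave if $\sigma_{ap}(T)\subseteq\partial\mathbb D$ (approximate point spectrum in the unit circle), $\|x\|\le\|Tx\|$ for all $x$, and $\|T'T^*x\|\le\|T'Tx\|$ for all $x$. *)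

theory Defs
  imports "HOL-Analysis.Analysis"
begin

text \<open>A complex Hilbert space: a real Banach space carrying a compatible complex
  scalar multiplication and a complex inner product (linear in the first argument,
  conjugate-symmetric, positive definite) inducing the norm.\<close>

class chilbert = banach +
  fixes scaleC :: "complex \<Rightarrow> 'a \<Rightarrow> 'a"
    and cinner :: "'a \<Rightarrow> 'a \<Rightarrow> complex"
  assumes scaleC_add_right: "scaleC a (x + y) = scaleC a x + scaleC a y"
    and scaleC_add_left: "scaleC (a + b) x = scaleC a x + scaleC b x"
    and scaleC_scaleC: "scaleC a (scaleC b x) = scaleC (a * b) x"
    and scaleC_one: "scaleC 1 x = x"
    and scaleR_scaleC: "scaleR r x = scaleC (complex_of_real r) x"
    and cinner_add_left: "cinner (x + y) z = cinner x z + cinner y z"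
    and cinner_scaleC_left: "cinner (scaleC a x) y = a * cinner x y"
    and cinner_commute: "cinner y x = cnj (cinner x y)"
    and cinner_ge_zero: "0 \<le> Re (cinner x x)"
    and cinner_eq_zero_iff: "cinner x x = 0 \<longleftrightarrow> x = 0"
    and norm_eq_sqrt_cinner: "norm x = sqrt (Re (cinner x x))"

definition cblinear :: "('a::chilbert \<Rightarrow> 'a) \<Rightarrow> bool" where
  "cblinear T \<longleftrightarrow> bounded_linear T \<and> (\<forall>a x. T (scaleC a x) = scaleC a (T x))"

definition adj :: "('a::chilbert \<Rightarrow> 'a) \<Rightarrow> 'a \<Rightarrow> 'a" where
  "adj T y = (THE z. \<forall>x. cinner (T x) y = cinner x z)"

definition positive_op :: "('a::chilbert \<Rightarrow> 'a) \<Rightarrow> bool" where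
  "positive_op A \<longleftrightarrow> (\<forall>x. Im (cinner (A x) x) = 0 \<and> 0 \<le> Re (cinner (A x) x))"

definition op_le :: "('a::chilbert \<Rightarrow> 'a) \<Rightarrow> ('a \<Rightarrow> 'a) \<Rightarrow> bool" where
  "op_le A B \<longleftrightarrow> positive_op (\<lambda>x. B x - A x)"

definition left_invertible :: "('a::chilbert \<Rightarrow> 'a) \<Rightarrow> bool" where
  "left_invertible T \<longleftrightarrow> cblinear T \<and> (\<exists>S. cblinear S \<and> (\<forall>x. S (T x) = x))"

text \<open>Cauchy dual \<open>T' = T (T*T)\<^sup>-\<^sup>1\<close> (for left-invertible \<open>T\<close>, \<open>T*T\<close> is bijective).\<close>
definition cauchy_dual :: "('a::chilbert \<Rightarrow> 'a) \<Rightarrow> 'a \<Rightarrow> 'a" where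
  "cauchy_dual T = T \<circ> inv (adj T \<circ> T)"

definition proj_onto :: "'a::chilbert set \<Rightarrow> 'a \<Rightarrow> 'a" where
  "proj_onto M x = (THE y. y \<in> M \<and> (\<forall>m\<in>M. cinner (x - y) m = 0))"

definition adj_on :: "'a::chilbert set \<Rightarrow> ('a \<Rightarrow> 'a) \<Rightarrow> 'a \<Rightarrow> 'a" where
  "adj_on M A y = (THE z. z \<in> M \<and> (\<forall>x\<in>M. cinner (A x) y = cinner x z))"

definition hyponormal_on :: "'a::chilbert set \<Rightarrow> ('a \<Rightarrow> 'a) \<Rightarrow> bool" where
  "hyponormal_on M A \<longleftrightarrow> A ` M \<subseteq> M \<and>
     (\<forall>x\<in>M. let c = cinner (adj_on M A (A x)) x - cinner (A (adj_on M A x)) x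
             in Im c = 0 \<and> 0 \<le> Re c)"

definition concave_op :: "('a::chilbert \<Rightarrow> 'a) \<Rightarrow> bool" where
  "concave_op T \<longleftrightarrow> cblinear T \<and>
     op_le (\<lambda>x. x - scaleC 2 (adj T (T x)) + adj T (adj T (T (T x)))) (\<lambda>x. 0)"

definition ap_spectrum :: "('a::chilbert \<Rightarrow> 'a) \<Rightarrow> complex set" where
  "ap_spectrum T = {l. \<forall>e>0. \<exists>x. norm x = 1 \<and> norm (T x - scaleC l x) < e}"

definition weakly_concave :: "('a::chilbert \<Rightarrow> 'a) \<Rightarrow> bool" where
  "weakly_concave T \<longleftrightarrow> left_invertible T \<and> ap_spectrum T \<subseteq> sphere 0 1 \<and>
     (\<forall>x. norm x \<le> norm (T x)) \<and>
     (\<forall>x. norm (cauchy_dual T (adj T x)) \<le> norm (cauchy_dual T (T x)))"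

end

theory Submission
  imports Defs
begin

(*
  For T bounded below, the Gram operator G = T*T is invertible and T G^-1 T* is the orthogonal
  projection P onto R(T); in particular T'T* = P. The quadratic forms of P and of T* G^-1 T are
  |Px|^2 and |T'Tx|^2. On M = R(T') = R(T) the adjoint of T'|M maps Tu to Pu, and hyponormality
  of T'|M means |(T'|M)* y| <= |T' y| on M, which again reads |Pu| <= |T'Tu|. So all four
  conditions say |Px| <= |T'Tx| for every x.

  For concave T the sequence n |-> |T^n x|^2 is concave and nonnegative, hence increasing, so T is
  expansive and in particular left-invertible. At an approximate eigenvalue l, the concavity
  inequality evaluated at unit approximate eigenvectors tends to (1 - |l|^2)^2 <= 0. Finally, for
  w = G^-1 T x one has <Tw, T^2 x> = |Tx|^2, so 0 <= |Tw - T^2 x|^2 together with concavity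
  gives |Px| <= |x| <= |Tw| = |T'Tx|.
*)

section \<open>Inner products and orthogonal projections\<close>

lemma cinner_zero_left [simp]: "cinner 0 y = 0"
  using cinner_add_left[of 0 0 y] by simp

lemma cinner_minus_left: "cinner (- x) y = - cinner x y"
  using cinner_add_left[of x "- x" y] by (simp add: eq_neg_iff_add_eq_0 add.commute)

lemma cinner_diff_left: "cinner (x - y) z = cinner x z - cinner y z"
  using cinner_add_left[of x "- y" z] by (simp add: cinner_minus_left)

lemma cinner_minus_right: "cinner x (- y) = - cinner x y"
  by (metis cinner_commute cinner_minus_left complex_cnj_minus)

lemma cinner_add_right: "cinner x (y + z) = cinner x y + cinner x z"
  by (metis cinner_commute cinner_add_left complex_cnj_add)

lemma cinner_diff_right: "cinner x (y - z) = cinner x y - cinner x z"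
  by (metis cinner_commute cinner_diff_left complex_cnj_diff)

lemma cinner_zero_right [simp]: "cinner x 0 = 0"
  by (metis cinner_commute cinner_zero_left complex_cnj_zero)

lemma cinner_scaleC_right: "cinner x (scaleC a y) = cnj a * cinner x y"
  by (metis cinner_commute cinner_scaleC_left complex_cnj_mult complex_cnj_cnj)

lemma cinner_self_eq_norm_sq: "cinner x x = complex_of_real ((norm x)\<^sup>2)"
proof -
  have "Im (cinner x x) = - Im (cinner x x)"
    using arg_cong[OF cinner_commute[of x x], of Im] by simp
  moreover have "Re (cinner x x) = (norm x)\<^sup>2"
    using cinner_ge_zero[of x] norm_eq_sqrt_cinner[of x] by simp
  ultimately show ?thesis by (simp add: complex_eq_iff)
qed

declare cinner_eq_zero_iff [simp]

lemma cinner_ext: "(\<And>x. cinner x y = cinner x z) \<Longrightarrow> y = z"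
  by (metis cinner_diff_right cinner_eq_zero_iff diff_eq_eq diff_self)

lemma scaleC_zero_left [simp]: "scaleC 0 x = 0"
  using scaleR_scaleC[of 0 x] by simp

lemma scaleC_zero_right [simp]: "scaleC a 0 = 0"
  using scaleC_add_right[of a 0 0] by simp

lemma scaleC_minus_left: "scaleC (- a) x = - scaleC a x"
  using scaleC_add_left[of a "- a" x] by (simp add: eq_neg_iff_add_eq_0 add.commute)

lemma scaleC_minus_right: "scaleC a (- x) = - scaleC a x"
  using scaleC_add_right[of a x "- x"] by (simp add: eq_neg_iff_add_eq_0 add.commute)

lemma scaleC_diff_right: "scaleC a (x - y) = scaleC a x - scaleC a y"
  using scaleC_add_right[of a x "- y"] by (simp add: scaleC_minus_right)

lemma norm_scaleC: "norm (scaleC a x) = cmod a * norm x"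
proof -
  have "complex_of_real ((norm (scaleC a x))\<^sup>2) = cinner (scaleC a x) (scaleC a x)"
    by (rule cinner_self_eq_norm_sq[symmetric])
  also have "\<dots> = (a * cnj a) * cinner x x"
    by (simp add: cinner_scaleC_left cinner_scaleC_right mult.assoc)
  also have "\<dots> = complex_of_real ((cmod a * norm x)\<^sup>2)"
    by (simp only: complex_norm_square[symmetric] cinner_self_eq_norm_sq power_mult_distrib
        of_real_mult)
  finally show ?thesis
    by (simp only: of_real_eq_iff power2_eq_iff_nonneg norm_ge_zero zero_le_mult_iff) simp
qed

lemma norm_add_sq: "(norm (x + y))\<^sup>2 = (norm x)\<^sup>2 + (norm y)\<^sup>2 + 2 * Re (cinner x y)"
proof -
  have "complex_of_real ((norm (x + y))\<^sup>2) = cinner (x + y) (x + y)"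
    by (rule cinner_self_eq_norm_sq[symmetric])
  also have "\<dots> = cinner x x + cinner y y + (cinner x y + cnj (cinner x y))"
    by (simp add: cinner_add_left cinner_add_right cinner_commute[of y x])
  finally show ?thesis
    by (simp add: cinner_self_eq_norm_sq complex_eq_iff)
qed

lemma norm_diff_sq: "(norm (x - y))\<^sup>2 = (norm x)\<^sup>2 + (norm y)\<^sup>2 - 2 * Re (cinner x y)"
  using norm_add_sq[of x "- y"] by (simp add: cinner_minus_right)

lemma norm_add_scaleC_optimal:
  assumes "m \<noteq> 0"
  shows "(norm (w + scaleC (- cinner w m / complex_of_real ((norm m)\<^sup>2)) m))\<^sup>2
           = (norm w)\<^sup>2 - (cmod (cinner w m))\<^sup>2 / (norm m)\<^sup>2"
proof -
  define a where "a = cinner w m"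
  define r where "r = (norm m)\<^sup>2"
  define t where "t = - a / complex_of_real r"
  have r: "r > 0" using assms by (simp add: r_def)
  have "cmod t = cmod a / r"
    using r by (simp add: t_def norm_divide)
  then have "(norm (scaleC t m))\<^sup>2 = (cmod a)\<^sup>2 / r"
    using r by (simp add: norm_scaleC power_mult_distrib power_divide r_def[symmetric])
      (simp add: power2_eq_square)
  moreover have "cinner w (scaleC t m) = - complex_of_real ((cmod a)\<^sup>2 / r)"
    by (simp add: cinner_scaleC_right t_def a_def[symmetric] of_real_divide complex_norm_square
        mult.commute del: of_real_power)
  ultimately show ?thesis
    unfolding a_def[symmetric] r_def[symmetric] t_def[symmetric] norm_add_sq by simp
qed

lemma cauchy_schwarz: "cmod (cinner x y) \<le> norm x * norm y"
proof (cases "y = 0")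
  case False
  then have "(cmod (cinner x y))\<^sup>2 / (norm y)\<^sup>2 \<le> (norm x)\<^sup>2"
    using norm_add_scaleC_optimal[of y x] by (metis diff_ge_0_iff_ge zero_le_power2)
  then have "(cmod (cinner x y))\<^sup>2 \<le> (norm x * norm y)\<^sup>2"
    using False by (simp add: pos_divide_le_eq power_mult_distrib)
  then show ?thesis by (simp add: power2_le_iff_abs_le)
qed simp

lemma orthogonal_if_norm_minimal:
  assumes "\<And>t. norm w \<le> norm (w + scaleC t m)"
  shows "cinner w m = 0"
proof (cases "m = 0")
  case False
  have "(norm w)\<^sup>2 \<le> (norm w)\<^sup>2 - (cmod (cinner w m))\<^sup>2 / (norm m)\<^sup>2"
    unfolding norm_add_scaleC_optimal[OF False, symmetric] using assms by (simp add: power_mono)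
  then show ?thesis using False by (simp add: divide_le_0_iff)
qed simp

lemma parallelogram_law:
  fixes x y :: "'a::chilbert"
  shows "(norm (x + y))\<^sup>2 + (norm (x - y))\<^sup>2 = 2 * (norm x)\<^sup>2 + 2 * (norm y)\<^sup>2"
  using norm_add_sq[of x y] norm_diff_sq[of x y] by simp

lemma Cauchy_if_norm_sq_minimizing:
  fixes X :: "nat \<Rightarrow> 'a::chilbert"
  assumes X_in: "\<And>n. X n \<in> C"
    and midpoint: "\<And>x y. x \<in> C \<Longrightarrow> y \<in> C \<Longrightarrow> scaleR (1/2) (x + y) \<in> C"
    and d_le: "\<And>x. x \<in> C \<Longrightarrow> d \<le> (norm x)\<^sup>2"
    and X_small: "\<And>n. (norm (X n))\<^sup>2 < d + inverse (real (Suc n))"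
  shows "Cauchy X"
proof (rule CauchyI)
  have X_close: "(norm (X m - X n))\<^sup>2 \<le> 2 * inverse (real (Suc m)) + 2 * inverse (real (Suc n))"
    for m n
  proof -
    have "d \<le> (norm (scaleR (1/2) (X m + X n)))\<^sup>2"
      by (rule d_le[OF midpoint[OF X_in X_in]])
    then have "4 * d \<le> (norm (X m + X n))\<^sup>2"
      by (simp add: power2_eq_square)
    then show ?thesis
      using parallelogram_law[of "X m" "X n"] X_small[of m] X_small[of n] by linarith
  qed
  fix e :: real
  assume "0 < e"
  then obtain M where M: "inverse (real (Suc M)) < e\<^sup>2 / 4"
    using reals_Archimedean[of "e\<^sup>2 / 4"] by auto
  have "norm (X m - X n) < e" if "M \<le> m" "M \<le> n" for m n
  proof -
    have "inverse (real (Suc m)) \<le> inverse (real (Suc M))"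
      "inverse (real (Suc n)) \<le> inverse (real (Suc M))"
      using that by (simp_all add: le_imp_inverse_le)
    then have "(norm (X m - X n))\<^sup>2 < e\<^sup>2"
      using X_close[of m n] M by linarith
    then show ?thesis
      using \<open>0 < e\<close> by (simp add: power_less_imp_less_base)
  qed
  then show "\<exists>M. \<forall>m\<ge>M. \<forall>n\<ge>M. norm (X m - X n) < e" by blast
qed

lemma norm_minimal_exists:
  fixes C :: "'a::chilbert set"
  assumes "closed C" and "C \<noteq> {}"
    and midpoint: "\<And>x y. x \<in> C \<Longrightarrow> y \<in> C \<Longrightarrow> scaleR (1/2) (x + y) \<in> C"
  shows "\<exists>w\<in>C. \<forall>x\<in>C. norm w \<le> norm x"
proof -
  define d where "d = Inf ((\<lambda>x. (norm x)\<^sup>2) ` C)"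
  have d_le: "d \<le> (norm x)\<^sup>2" if "x \<in> C" for x
    unfolding d_def by (rule cInf_lower) (use that in \<open>auto intro: bdd_belowI[where m=0]\<close>)
  have "\<exists>x\<in>C. (norm x)\<^sup>2 < d + inverse (real (Suc n))" for n
    using cInf_lessD[of "(\<lambda>x. (norm x)\<^sup>2) ` C" "d + inverse (real (Suc n))"] \<open>C \<noteq> {}\<close>
    unfolding d_def by auto
  then obtain X where X_in: "\<And>n. X n \<in> C"
    and X_small: "\<And>n. (norm (X n))\<^sup>2 < d + inverse (real (Suc n))"
    by metis
  have "Cauchy X"
    using X_in midpoint d_le X_small by (rule Cauchy_if_norm_sq_minimizing)
  then obtain w where w: "X \<longlonglongrightarrow> w"
    using Cauchy_convergent convergent_def by blast
  have "w \<in> C"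
    using closed_sequentially[OF \<open>closed C\<close> X_in w] .
  have "(\<lambda>n. (norm (X n))\<^sup>2) \<longlonglongrightarrow> (norm w)\<^sup>2"
    by (intro tendsto_intros w)
  moreover have "(\<lambda>n. d + inverse (real (Suc n))) \<longlonglongrightarrow> d"
    using tendsto_add[OF tendsto_const LIMSEQ_inverse_real_of_nat, of d] by simp
  ultimately have "(norm w)\<^sup>2 \<le> d"
    using X_small by (intro LIMSEQ_le) (auto intro: less_imp_le)
  then have "norm w \<le> norm x" if "x \<in> C" for x
    using d_le[OF that] by (simp add: power2_le_imp_le)
  then show ?thesis
    using \<open>w \<in> C\<close> by blast
qed

lemma orthogonal_projection_exists:
  fixes M :: "'a::chilbert set"
  assumes "closed M" "subspace M" and scaleC_closed: "\<And>a x. x \<in> M \<Longrightarrow> scaleC a x \<in> M"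
  shows "\<exists>p\<in>M. \<forall>m\<in>M. cinner (v - p) m = 0"
proof -
  define C where "C = (\<lambda>m. v - m) ` M"
  have closed_C: "closed C"
    unfolding C_def using closed_translation[OF closed_negations[OF \<open>closed M\<close>], of v]
    by (simp add: image_image)
  have nonempty_C: "C \<noteq> {}"
    unfolding C_def using subspace_0[OF \<open>subspace M\<close>] by blast
  have midpoint_C: "scaleR (1/2) (x + y) \<in> C" if xy: "x \<in> C" "y \<in> C" for x y
  proof -
    obtain m1 m2 where m: "m1 \<in> M" "m2 \<in> M" "x = v - m1" "y = v - m2"
      using xy unfolding C_def by blast
    have "(1/2) *\<^sub>R v + (1/2) *\<^sub>R v = v"
      by (simp flip: scaleR_add_left)
    then have "scaleR (1/2) (x + y) = v - scaleR (1/2) (m1 + m2)"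
      unfolding m(3,4) by (simp add: algebra_simps)
    moreover have "scaleR (1/2) (m1 + m2) \<in> M"
      using m(1,2) \<open>subspace M\<close> by (simp add: subspace_add subspace_scale)
    ultimately show ?thesis
      unfolding C_def by blast
  qed
  obtain w where "w \<in> C" and w_min: "\<And>x. x \<in> C \<Longrightarrow> norm w \<le> norm x"
    using norm_minimal_exists[OF closed_C nonempty_C midpoint_C] by blast
  then obtain p where "p \<in> M" "w = v - p"
    unfolding C_def by blast
  have "cinner w m = 0" if "m \<in> M" for m
  proof (rule orthogonal_if_norm_minimal)
    fix t
    have "p + scaleC (- t) m \<in> M"
      using \<open>p \<in> M\<close> that \<open>subspace M\<close> scaleC_closed by (simp add: subspace_add)
    moreover have "w + scaleC t m = v - (p + scaleC (- t) m)"
      using \<open>w = v - p\<close> by (simp add: scaleC_minus_left)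
    ultimately show "norm w \<le> norm (w + scaleC t m)"
      using w_min unfolding C_def by (metis image_eqI)
  qed
  then show ?thesis
    using \<open>p \<in> M\<close> \<open>w = v - p\<close> by blast
qed

section \<open>Riesz representation and adjoints\<close>

lemma bounded_linear_cinner_left: "bounded_linear (\<lambda>x. cinner x y)"
proof (rule bounded_linear_intro[where K="norm y"])
  show "cinner (r *\<^sub>R x) y = r *\<^sub>R cinner x y" for r x
    by (simp add: scaleR_scaleC cinner_scaleC_left scaleR_conv_of_real)
  show "norm (cinner x y) \<le> norm x * norm y" for x
    by (rule cauchy_schwarz)
qed (rule cinner_add_left)

lemma riesz_representation:
  fixes f :: "'a::chilbert \<Rightarrow> complex"
  assumes "bounded_linear f" and f_scaleC: "\<And>a x. f (scaleC a x) = a * f x"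
  shows "\<exists>z. \<forall>x. f x = cinner x z"
proof (cases "\<forall>x. f x = 0")
  case False
  interpret f: bounded_linear f by fact
  define N where "N = {x. f x = 0}"
  have "closed N"
    unfolding N_def by (intro closed_Collect_eq continuous_intros f.continuous_on)
  moreover have "subspace N"
    unfolding N_def by (rule linear_subspace_kernel[OF f.linear])
  moreover have "\<And>a x. x \<in> N \<Longrightarrow> scaleC a x \<in> N"
    unfolding N_def by (simp add: f_scaleC)
  ultimately have proj: "\<exists>p\<in>N. \<forall>m\<in>N. cinner (v - p) m = 0" for v
    using orthogonal_projection_exists by blast
  obtain x0 where "f x0 \<noteq> 0"
    using False by blast
  then obtain p where "p \<in> N" and p_orth: "\<And>m. m \<in> N \<Longrightarrow> cinner (x0 - p) m = 0"
    using proj by blast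
  define w where "w = scaleC (inverse (f x0)) (x0 - p)"
  have "f w = 1"
    using \<open>f x0 \<noteq> 0\<close> \<open>p \<in> N\<close> by (simp add: w_def N_def f_scaleC f.diff)
  have w_orth: "cinner m w = 0" if "m \<in> N" for m
    using p_orth[OF that] cinner_commute[of m "x0 - p"] by (simp add: w_def cinner_scaleC_right)
  have "w \<noteq> 0"
    using \<open>f w = 1\<close> by auto
  have "f x = cinner x (scaleC (cnj (inverse (cinner w w))) w)" for x
  proof -
    have "x - scaleC (f x) w \<in> N"
      unfolding N_def by (simp add: f.diff f_scaleC \<open>f w = 1\<close>)
    then have "cinner (x - scaleC (f x) w) w = 0"
      by (rule w_orth)
    then have "cinner x w = f x * cinner w w"
      by (simp add: cinner_diff_left cinner_scaleC_left)
    then show ?thesis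
      using \<open>w \<noteq> 0\<close> by (simp add: cinner_scaleC_right)
  qed
  then show ?thesis by blast
qed (auto intro: exI[of _ 0])

lemma cblinear_simps:
  assumes "cblinear T"
  shows "T (x + y) = T x + T y" "T (x - y) = T x - T y" "T 0 = 0" "T (scaleC a x) = scaleC a (T x)"
  using assms linear_simps[of T] unfolding cblinear_def by auto

lemma cblinear_bounded_linear: "cblinear T \<Longrightarrow> bounded_linear T"
  unfolding cblinear_def by simp

lemma cblinear_compose: "cblinear A \<Longrightarrow> cblinear B \<Longrightarrow> cblinear (A \<circ> B)"
  unfolding cblinear_def comp_def by (auto intro: bounded_linear_compose)

lemma cinner_adj_right:
  assumes "cblinear T"
  shows "cinner (T x) y = cinner x (adj T y)"
proof -
  have "bounded_linear (\<lambda>x. cinner (T x) y)"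
    using bounded_linear_compose[OF bounded_linear_cinner_left cblinear_bounded_linear[OF assms]] .
  then obtain z where z: "\<forall>x. cinner (T x) y = cinner x z"
    using riesz_representation[of "\<lambda>x. cinner (T x) y"]
    by (auto simp: cblinear_simps[OF assms] cinner_scaleC_left)
  moreover have "adj T y = z"
    unfolding adj_def
  proof (rule the_equality)
    show "\<And>z'. \<forall>x. cinner (T x) y = cinner x z' \<Longrightarrow> z' = z"
      using z by (metis cinner_ext)
  qed (rule z)
  ultimately show ?thesis by simp
qed

lemma cinner_adj_left: "cblinear T \<Longrightarrow> cinner (adj T y) x = cinner y (T x)"
  by (metis cinner_adj_right cinner_commute)

lemma cblinear_adj:
  assumes "cblinear T"
  shows "cblinear (adj T)"
proof -
  have add: "adj T (x + y) = adj T x + adj T y" for x y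
    by (rule cinner_ext) (simp add: cinner_adj_right[OF assms, symmetric] cinner_add_right)
  have scale: "adj T (scaleC a y) = scaleC a (adj T y)" for a y
    by (rule cinner_ext) (simp add: cinner_adj_right[OF assms, symmetric] cinner_scaleC_right)
  obtain K where "K > 0" and K: "\<And>x. norm (T x) \<le> norm x * K"
    using bounded_linear.pos_bounded[OF cblinear_bounded_linear[OF assms]] by blast
  have "norm (adj T y) \<le> norm y * K" for y
  proof (cases "adj T y = 0")
    case False
    have "norm (adj T y) * norm (adj T y) = Re (cinner y (T (adj T y)))"
      by (simp add: cinner_adj_left[OF assms, symmetric] cinner_self_eq_norm_sq power2_eq_square)
    also have "\<dots> \<le> norm y * norm (T (adj T y))"
      by (rule order_trans[OF complex_Re_le_cmod cauchy_schwarz])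
    also have "\<dots> \<le> (norm y * K) * norm (adj T y)"
      using K by (simp add: mult_left_mono mult.assoc mult.commute[of K])
    finally show ?thesis
      using False by (simp add: mult_right_le_imp_le)
  qed (simp add: \<open>K > 0\<close> less_imp_le)
  then have "bounded_linear (adj T)"
    by (intro bounded_linear_intro[where K=K]) (auto simp: add scale scaleR_scaleC)
  then show ?thesis
    unfolding cblinear_def using scale by simp
qed

lemma proj_onto_eqI:
  assumes "subspace M" "p \<in> M" "\<And>m. m \<in> M \<Longrightarrow> cinner (x - p) m = 0"
  shows "proj_onto M x = p"
  unfolding proj_onto_def
proof (rule the_equality)
  fix q
  assume q: "q \<in> M \<and> (\<forall>m\<in>M. cinner (x - q) m = 0)"
  then have "p - q \<in> M"
    using assms(1,2) subspace_diff by blast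
  then have "cinner (p - q) (p - q) = cinner (x - q) (p - q) - cinner (x - p) (p - q)"
    by (simp add: cinner_diff_left)
  also have "\<dots> = 0"
    using q assms(3) \<open>p - q \<in> M\<close> by simp
  finally show "q = p" by simp
qed (use assms in auto)

lemma adj_on_eqI:
  assumes "subspace M" "z \<in> M" "\<And>x. x \<in> M \<Longrightarrow> cinner (A x) y = cinner x z"
  shows "adj_on M A y = z"
  unfolding adj_on_def
proof (rule the_equality)
  fix w
  assume w: "w \<in> M \<and> (\<forall>x\<in>M. cinner (A x) y = cinner x w)"
  then have "w - z \<in> M"
    using assms(1,2) subspace_diff by blast
  then have "cinner (w - z) (w - z) = 0"
    using w assms(3) by (simp add: cinner_diff_right)
  then show "w = z" by simp
qed (use assms in auto)

lemma hyponormal_on_iff_norm_adj_on_le: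
  assumes "A ` M \<subseteq> M"
    and adj_on_in: "\<And>y. y \<in> M \<Longrightarrow> adj_on M A y \<in> M"
    and cinner_adj_on: "\<And>x y. x \<in> M \<Longrightarrow> y \<in> M \<Longrightarrow> cinner (A x) y = cinner x (adj_on M A y)"
  shows "hyponormal_on M A \<longleftrightarrow> (\<forall>x\<in>M. norm (adj_on M A x) \<le> norm (A x))"
proof -
  have "cinner (adj_on M A (A x)) x - cinner (A (adj_on M A x)) x
          = complex_of_real ((norm (A x))\<^sup>2 - (norm (adj_on M A x))\<^sup>2)" if "x \<in> M" for x
  proof -
    have "cinner (adj_on M A (A x)) x = cnj (cinner (A x) (A x))"
      using that assms(1) by (metis cinner_adj_on cinner_commute image_subset_iff)
    moreover have "cinner (A (adj_on M A x)) x = cinner (adj_on M A x) (adj_on M A x)"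
      using that by (simp add: adj_on_in cinner_adj_on)
    ultimately show ?thesis
      by (simp add: cinner_self_eq_norm_sq)
  qed
  then show ?thesis
    unfolding hyponormal_on_def Let_def using assms(1) by (simp add: abs_le_square_iff)
qed

lemma op_le_iff_norm_le:
  assumes "\<And>x. cinner (A x) x = complex_of_real ((norm (f x))\<^sup>2)"
    and "\<And>x. cinner (B x) x = complex_of_real ((norm (g x))\<^sup>2)"
  shows "op_le A B \<longleftrightarrow> (\<forall>x. norm (f x) \<le> norm (g x))"
  unfolding op_le_def positive_op_def
  by (simp add: cinner_diff_left assms abs_le_square_iff)

section \<open>Cauchy duals of operators bounded below\<close>

locale bounded_below_op =
  fixes T :: "'a::chilbert \<Rightarrow> 'a" and K :: real
  assumes cblinear: "cblinear T"
    and K_pos: "0 < K"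
    and bounded_below: "\<And>x. norm x \<le> K * norm (T x)"
begin

lemmas T_simps = cblinear_simps[OF cblinear]
lemmas adj_T_simps = cblinear_simps[OF cblinear_adj[OF cblinear]]

lemma cinner_gram_left: "cinner (adj T (T x)) y = cinner (T x) (T y)"
  by (simp add: cinner_adj_left[OF cblinear])

lemma cblinear_gram: "cblinear (adj T \<circ> T)"
  by (rule cblinear_compose[OF cblinear_adj[OF cblinear] cblinear])

lemma gram_bounded_below: "norm x \<le> K\<^sup>2 * norm (adj T (T x))"
proof (cases "x = 0")
  case False
  have "norm x * norm x \<le> K\<^sup>2 * (norm (T x))\<^sup>2"
    using bounded_below[of x] by (metis norm_ge_zero power2_eq_square power_mono power_mult_distrib)
  also have "\<dots> = K\<^sup>2 * Re (cinner (adj T (T x)) x)"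
    by (simp add: cinner_gram_left cinner_self_eq_norm_sq)
  also have "\<dots> \<le> (K\<^sup>2 * norm (adj T (T x))) * norm x"
    using order_trans[OF complex_Re_le_cmod cauchy_schwarz, of "adj T (T x)" x]
    by (simp add: mult.assoc mult_left_mono)
  finally show ?thesis
    using False by (simp add: mult_right_le_imp_le)
qed simp

lemma inj_gram: "inj (adj T \<circ> T)"
proof (rule injI)
  fix x y
  assume "(adj T \<circ> T) x = (adj T \<circ> T) y"
  then have "adj T (T (x - y)) = 0"
    by (simp add: T_simps adj_T_simps)
  then show "x = y"
    using gram_bounded_below[of "x - y"] by simp
qed

lemma surj_gram: "surj (adj T \<circ> T)"
proof -
  let ?G = "adj T \<circ> T"
  have "subspace (range ?G)"
    using bounded_linear.linear[OF cblinear_bounded_linear[OF cblinear_gram]]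
    by (rule linear_subspace_image[OF _ subspace_UNIV])
  moreover have "complete (range ?G)"
  proof (rule complete_isometric_image[where e="1 / K\<^sup>2"])
    show "\<forall>x\<in>UNIV. 1 / K\<^sup>2 * norm x \<le> norm (?G x)"
      using gram_bounded_below K_pos by (simp add: field_simps)
  qed (use K_pos cblinear_gram in \<open>auto simp: cblinear_bounded_linear complete_UNIV\<close>)
  moreover have "scaleC a (?G u) \<in> range ?G" for a u
    using rangeI[of ?G "scaleC a u"] by (simp add: T_simps adj_T_simps)
  ultimately have proj: "\<exists>p\<in>range ?G. \<forall>m\<in>range ?G. cinner (v - p) m = 0" for v
    using orthogonal_projection_exists[OF complete_imp_closed] by (metis rangeE)
  have "v \<in> range ?G" for v
  proof -
    obtain p where "p \<in> range ?G" and "\<forall>m\<in>range ?G. cinner (v - p) m = 0"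
      using proj by blast
    then have "cinner (v - p) (adj T (T (v - p))) = 0"
      by auto
    then have "cinner (T (v - p)) (T (v - p)) = 0"
      by (metis cinner_commute cinner_gram_left complex_cnj_zero)
    then have "v = p"
      using bounded_below[of "v - p"] by simp
    with \<open>p \<in> range ?G\<close> show ?thesis by simp
  qed
  then show ?thesis by auto
qed

lemma gram_inv_right [simp]: "adj T (T (inv (adj T \<circ> T) y)) = y"
  using surj_f_inv_f[OF surj_gram] by simp

lemma gram_inv_left [simp]: "inv (adj T \<circ> T) (adj T (T x)) = x"
  using inv_f_f[OF inj_gram] by simp

lemma cblinear_gram_inv: "cblinear (inv (adj T \<circ> T))"
proof -
  let ?H = "inv (adj T \<circ> T)"
  have gram_eq_iff: "x = y \<longleftrightarrow> adj T (T x) = adj T (T y)" for x y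
    using inj_gram by (auto simp: inj_def)
  have add: "?H (x + y) = ?H x + ?H y" for x y
    by (simp add: gram_eq_iff T_simps adj_T_simps)
  have scale: "?H (scaleC a x) = scaleC a (?H x)" for a x
    by (simp add: gram_eq_iff T_simps adj_T_simps)
  have "norm (?H x) \<le> norm x * K\<^sup>2" for x
    using gram_bounded_below[of "?H x"] by (simp add: mult.commute)
  then have "bounded_linear ?H"
    by (intro bounded_linear_intro[where K="K\<^sup>2"]) (auto simp: add scale scaleR_scaleC)
  then show ?thesis
    unfolding cblinear_def using scale by simp
qed

lemma left_invertible: "left_invertible T"
  unfolding left_invertible_def
  using cblinear cblinear_compose[OF cblinear_gram_inv cblinear_adj[OF cblinear]] by auto

lemma cinner_gram_inv_self:
  "cinner (inv (adj T \<circ> T) y) y = complex_of_real ((norm (T (inv (adj T \<circ> T) y)))\<^sup>2)"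
  by (metis cinner_commute cinner_gram_left cinner_self_eq_norm_sq complex_cnj_complex_of_real
      gram_inv_right)

lemma subspace_range: "subspace (range T)"
  using bounded_linear.linear[OF cblinear_bounded_linear[OF cblinear]]
  by (rule linear_subspace_image[OF _ subspace_UNIV])

lemma proj_range_eq: "proj_onto (range T) x = T (inv (adj T \<circ> T) (adj T x))"
proof (rule proj_onto_eqI[OF subspace_range])
  fix m
  assume "m \<in> range T"
  then obtain v where "m = T v" by blast
  then show "cinner (x - T (inv (adj T \<circ> T) (adj T x))) m = 0"
    by (simp add: cinner_diff_left cinner_gram_left[symmetric] cinner_adj_left[OF cblinear])
qed simp

lemma cauchy_dual_adj: "cauchy_dual T (adj T x) = proj_onto (range T) x"
  by (simp add: cauchy_dual_def proj_range_eq)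

lemma gram_proj_eq: "T \<circ> inv (adj T \<circ> T) \<circ> adj T = proj_onto (range T)"
  by (rule ext) (simp add: proj_range_eq)

lemma cinner_proj_range_self:
  "cinner (proj_onto (range T) x) x = complex_of_real ((norm (proj_onto (range T) x))\<^sup>2)"
  by (simp add: proj_range_eq cinner_adj_right[OF cblinear] cinner_gram_inv_self)

lemma cinner_dual_gram_self:
  "cinner ((adj T \<circ> inv (adj T \<circ> T) \<circ> T) x) x
     = complex_of_real ((norm (cauchy_dual T (T x)))\<^sup>2)"
  by (simp add: cauchy_dual_def cinner_adj_left[OF cblinear] cinner_gram_inv_self)

lemma norm_proj_range_le: "norm (proj_onto (range T) x) \<le> norm x"
proof (cases "proj_onto (range T) x = 0")
  case False
  have "norm (proj_onto (range T) x) * norm (proj_onto (range T) x)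
          \<le> norm x * norm (proj_onto (range T) x)"
    using order_trans[OF complex_Re_le_cmod cauchy_schwarz, of "proj_onto (range T) x" x]
    by (simp add: cinner_proj_range_self power2_eq_square mult.commute)
  then show ?thesis
    using False by (simp add: mult_right_le_imp_le)
qed simp

lemma cinner_proj_range: "cinner (proj_onto (range T) x) (T v) = cinner x (T v)"
  by (simp add: proj_range_eq cinner_gram_left[symmetric] cinner_adj_left[OF cblinear])

lemma cauchy_dual_in_range: "cauchy_dual T y \<in> range T"
  by (simp add: cauchy_dual_def)

lemma range_cauchy_dual: "range (cauchy_dual T) = range T"
  unfolding cauchy_dual_def by (metis fun.set_map gram_inv_left surj_def)

lemma cinner_cauchy_dual_range:
  "cinner (cauchy_dual T (T v)) (T u) = cinner (T v) (proj_onto (range T) u)"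
  by (metis cauchy_dual_def cinner_commute cinner_gram_left cinner_proj_range comp_apply
      gram_inv_right)

lemma adj_on_cauchy_dual: "adj_on (range T) (cauchy_dual T) (T u) = proj_onto (range T) u"
  using cinner_cauchy_dual_range by (intro adj_on_eqI[OF subspace_range]) (auto simp: proj_range_eq)

lemma hyponormal_cauchy_dual_iff:
  "hyponormal_on (range (cauchy_dual T)) (cauchy_dual T)
     \<longleftrightarrow> (\<forall>x. norm (proj_onto (range T) x) \<le> norm (cauchy_dual T (T x)))"
proof -
  have "hyponormal_on (range T) (cauchy_dual T)
          \<longleftrightarrow> (\<forall>y\<in>range T.
                 norm (adj_on (range T) (cauchy_dual T) y) \<le> norm (cauchy_dual T y))"
    by (rule hyponormal_on_iff_norm_adj_on_le)
      (auto simp: cauchy_dual_in_range adj_on_cauchy_dual proj_range_eq cinner_cauchy_dual_range)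
  then show ?thesis
    by (simp add: range_cauchy_dual adj_on_cauchy_dual)
qed

lemma norm_le_cauchy_dual_if_concave_at:
  assumes "(norm x)\<^sup>2 - 2 * (norm (T x))\<^sup>2 + (norm (T (T x)))\<^sup>2 \<le> 0"
  shows "norm x \<le> norm (cauchy_dual T (T x))"
proof -
  define w where "w = inv (adj T \<circ> T) (T x)"
  have "cinner (T w) (T (T x)) = cinner (adj T (T w)) (T x)"
    by (rule cinner_gram_left[symmetric])
  then have "Re (cinner (T w) (T (T x))) = (norm (T x))\<^sup>2"
    by (simp add: w_def cinner_self_eq_norm_sq)
  then have "0 \<le> (norm (T w))\<^sup>2 + (norm (T (T x)))\<^sup>2 - 2 * (norm (T x))\<^sup>2"
    using norm_diff_sq[of "T w" "T (T x)"] zero_le_power2[of "norm (T w - T (T x))"] by linarith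
  then have "(norm x)\<^sup>2 \<le> (norm (T w))\<^sup>2"
    using assms by linarith
  then show ?thesis
    unfolding cauchy_dual_def w_def comp_apply by (rule power2_le_imp_le) simp
qed

end

lemma left_invertible_imp_bounded_below_op:
  assumes "left_invertible T"
  obtains K where "bounded_below_op T K"
proof -
  obtain L where "cblinear T" "cblinear L" and L_left: "\<And>x. L (T x) = x"
    using assms unfolding left_invertible_def by blast
  then obtain K where "K > 0" and K: "\<And>x. norm (L x) \<le> norm x * K"
    using bounded_linear.pos_bounded[OF cblinear_bounded_linear] by blast
  have "norm x \<le> K * norm (T x)" for x
    using K[of "T x"] L_left[of x] by (simp add: mult.commute)
  with \<open>cblinear T\<close> \<open>K > 0\<close> show ?thesis
    by (intro that) unfold_locales
qed

section \<open>Concave operators\<close>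

lemma concave_op_norm_ineq:
  assumes "concave_op S"
  shows "(norm x)\<^sup>2 - 2 * (norm (S x))\<^sup>2 + (norm (S (S x)))\<^sup>2 \<le> 0"
proof -
  have "cblinear S"
    using assms unfolding concave_op_def by simp
  have "0 \<le> Re (cinner (0 - (x - scaleC 2 (adj S (S x)) + adj S (adj S (S (S x))))) x)"
    using assms unfolding concave_op_def op_le_def positive_op_def by blast
  also have "\<dots> = - ((norm x)\<^sup>2 - 2 * (norm (S x))\<^sup>2 + (norm (S (S x)))\<^sup>2)"
    by (simp add: cinner_diff_left cinner_add_left cinner_scaleC_left
        cinner_adj_left[OF \<open>cblinear S\<close>] cinner_self_eq_norm_sq)
  finally show ?thesis
    by simp
qed

lemma incseq_if_nonneg_concave:
  fixes a :: "nat \<Rightarrow> real"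
  assumes nonneg: "\<And>n. 0 \<le> a n" and concave: "\<And>n. a n - 2 * a (Suc n) + a (Suc (Suc n)) \<le> 0"
  shows "incseq a"
proof (rule incseq_SucI)
  fix n
  define d where "d = a (Suc n) - a n"
  have step_le: "a (Suc (n + k)) - a (n + k) \<le> d" for k
  proof (induction k)
    case (Suc k)
    then show ?case
      using concave[of "n + k"] by simp
  qed (simp add: d_def)
  have linear_bound: "a (n + k) \<le> a n + real k * d" for k
  proof (induction k)
    case (Suc k)
    then show ?case
      using step_le[of k] by (simp add: algebra_simps)
  qed simp
  show "a n \<le> a (Suc n)"
  proof (rule ccontr)
    assume "\<not> a n \<le> a (Suc n)"
    then obtain k where "a n < real k * (- d)"
      using ex_less_of_nat_mult[of "- d" "a n"] by (auto simp: d_def)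
    then show False
      using linear_bound[of k] nonneg[of "n + k"] by simp
  qed
qed

lemma concave_op_expansive:
  assumes "concave_op S"
  shows "norm x \<le> norm (S x)"
proof -
  have "incseq (\<lambda>n. (norm ((S ^^ n) x))\<^sup>2)"
    using concave_op_norm_ineq[OF assms] by (intro incseq_if_nonneg_concave) simp_all
  then have "(norm x)\<^sup>2 \<le> (norm (S x))\<^sup>2"
    using incseq_SucD[of _ 0] by fastforce
  then show ?thesis
    by (rule power2_le_imp_le) simp
qed

lemma ap_spectrumE:
  assumes "l \<in> ap_spectrum S"
  obtains X where "\<And>n. norm (X n) = 1" "(\<lambda>n. S (X n) - scaleC l (X n)) \<longlonglongrightarrow> 0"
proof -
  have "\<forall>n. \<exists>x. norm x = 1 \<and> norm (S x - scaleC l x) < 1 / real (Suc n)"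
    using assms unfolding ap_spectrum_def by simp
  then obtain X where X: "\<forall>n. norm (X n) = 1 \<and> norm (S (X n) - scaleC l (X n)) < 1 / real (Suc n)"
    by (rule choice[THEN exE])
  have unit: "\<And>n. norm (X n) = 1"
    using X by simp
  have "(\<lambda>n. S (X n) - scaleC l (X n)) \<longlonglongrightarrow> 0"
    using X by (intro LIMSEQ_norm_0) simp
  with unit show thesis
    by (rule that)
qed

lemma tendsto_norm_if_diff_tendsto_zero:
  fixes f g :: "nat \<Rightarrow> 'a::real_normed_vector"
  assumes "(\<lambda>n. f n - g n) \<longlonglongrightarrow> 0" and "\<And>n. norm (g n) = c"
  shows "(\<lambda>n. norm (f n)) \<longlonglongrightarrow> c"
proof -
  have "(\<lambda>n. norm (f n) - c) \<longlonglongrightarrow> 0"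
  proof (rule Lim_null_comparison)
    show "\<forall>\<^sub>F n in sequentially. norm (norm (f n) - c) \<le> norm (f n - g n)"
    proof (intro always_eventually allI)
      fix n
      show "norm (norm (f n) - c) \<le> norm (f n - g n)"
        using norm_triangle_ineq3[of "f n" "g n"] by (simp add: assms(2))
    qed
  qed (rule iffD2[OF tendsto_norm_zero_iff assms(1)])
  then have "(\<lambda>n. (norm (f n) - c) + c) \<longlonglongrightarrow> 0 + c"
    by (rule tendsto_add[OF _ tendsto_const])
  then show ?thesis
    by simp
qed

lemma concave_op_ap_spectrum:
  assumes "concave_op S"
  shows "ap_spectrum S \<subseteq> sphere 0 1"
proof
  fix l
  assume "l \<in> ap_spectrum S"
  then obtain X where unit: "\<And>n. norm (X n) = 1"
    and approx: "(\<lambda>n. S (X n) - scaleC l (X n)) \<longlonglongrightarrow> 0"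
    by (elim ap_spectrumE) blast
  have "cblinear S"
    using assms unfolding concave_op_def by simp
  have "S (S (X n)) - scaleC (l * l) (X n)
          = S (S (X n) - scaleC l (X n)) + scaleC l (S (X n) - scaleC l (X n))" for n
    by (simp add: cblinear_simps[OF \<open>cblinear S\<close>] scaleC_diff_right scaleC_scaleC)
  moreover have
    "(\<lambda>n. S (S (X n) - scaleC l (X n)) + scaleC l (S (X n) - scaleC l (X n))) \<longlonglongrightarrow> 0"
  proof -
    have "(\<lambda>n. norm (scaleC l (S (X n) - scaleC l (X n)))) \<longlonglongrightarrow> 0"
      using tendsto_mult_right_zero[OF iffD2[OF tendsto_norm_zero_iff approx], of "cmod l"]
      by (simp add: norm_scaleC)
    then have "(\<lambda>n. scaleC l (S (X n) - scaleC l (X n))) \<longlonglongrightarrow> 0"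
      by (simp only: tendsto_norm_zero_iff)
    then show ?thesis
      using tendsto_add[OF bounded_linear.tendsto_zero[OF
            cblinear_bounded_linear[OF \<open>cblinear S\<close>] approx]]
      by simp
  qed
  ultimately have approx2: "(\<lambda>n. S (S (X n)) - scaleC (l * l) (X n)) \<longlonglongrightarrow> 0"
    by simp
  have "(\<lambda>n. norm (S (X n))) \<longlonglongrightarrow> cmod l"
    using approx by (rule tendsto_norm_if_diff_tendsto_zero) (simp add: norm_scaleC unit)
  moreover have "(\<lambda>n. norm (S (S (X n)))) \<longlonglongrightarrow> (cmod l)\<^sup>2"
    using approx2 by (rule tendsto_norm_if_diff_tendsto_zero)
      (simp add: norm_scaleC unit norm_mult power2_eq_square)
  ultimately have "(\<lambda>n. 1 - 2 * (norm (S (X n)))\<^sup>2 + (norm (S (S (X n))))\<^sup>2)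
                     \<longlonglongrightarrow> 1 - 2 * (cmod l)\<^sup>2 + ((cmod l)\<^sup>2)\<^sup>2"
    by (intro tendsto_intros)
  moreover have "1 - 2 * (norm (S (X n)))\<^sup>2 + (norm (S (S (X n))))\<^sup>2 \<le> 0" for n
    using concave_op_norm_ineq[OF assms, of "X n"] unit by simp
  ultimately have "1 - 2 * (cmod l)\<^sup>2 + ((cmod l)\<^sup>2)\<^sup>2 \<le> 0"
    by (intro LIMSEQ_le_const2) auto
  then have "((cmod l)\<^sup>2 - 1)\<^sup>2 \<le> 0"
    by (simp add: power2_diff)
  then have "cmod l = 1"
    using norm_ge_zero[of l] by (auto simp: power2_eq_1_iff)
  then show "l \<in> sphere 0 1"
    by simp
qed

lemma concave_imp_weakly_concave:
  assumes "concave_op S"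
  shows "weakly_concave S"
proof -
  have expansive: "\<forall>x. norm x \<le> norm (S x)"
    using concave_op_expansive[OF assms] by blast
  interpret bounded_below_op S 1
    using assms expansive by unfold_locales (simp_all add: concave_op_def)
  have "norm (cauchy_dual S (adj S x)) \<le> norm (cauchy_dual S (S x))" for x
    using order_trans[OF norm_proj_range_le
        norm_le_cauchy_dual_if_concave_at[OF concave_op_norm_ineq[OF assms]]]
    by (simp add: cauchy_dual_adj)
  then show ?thesis
    unfolding weakly_concave_def using left_invertible concave_op_ap_spectrum[OF assms] expansive
    by blast
qed

theorem proposition2p3:
  fixes T :: "'a::chilbert \<Rightarrow> 'a"
  assumes "left_invertible T"
  shows "((\<forall>x. norm (cauchy_dual T (adj T x)) \<le> norm (cauchy_dual T (T x)))
            \<longleftrightarrow> op_le (T \<circ> inv (adj T \<circ> T) \<circ> adj T) (adj T \<circ> inv (adj T \<circ> T) \<circ> T))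
       \<and> (op_le (T \<circ> inv (adj T \<circ> T) \<circ> adj T) (adj T \<circ> inv (adj T \<circ> T) \<circ> T)
            \<longleftrightarrow> op_le (proj_onto (range T)) (adj T \<circ> inv (adj T \<circ> T) \<circ> T))
       \<and> (op_le (proj_onto (range T)) (adj T \<circ> inv (adj T \<circ> T) \<circ> T)
            \<longleftrightarrow> hyponormal_on (range (cauchy_dual T)) (cauchy_dual T))
       \<and> (\<forall>S::'a \<Rightarrow> 'a. concave_op S \<longrightarrow> weakly_concave S)"
proof -
  obtain K where "bounded_below_op T K"
    using left_invertible_imp_bounded_below_op[OF assms] .
  then interpret bounded_below_op T K .
  define C where "C \<longleftrightarrow> (\<forall>x. norm (proj_onto (range T) x) \<le> norm (cauchy_dual T (T x)))"
  have i: "(\<forall>x. norm (cauchy_dual T (adj T x)) \<le> norm (cauchy_dual T (T x))) \<longleftrightarrow> C"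
    by (simp add: C_def cauchy_dual_adj)
  have iii: "op_le (proj_onto (range T)) (adj T \<circ> inv (adj T \<circ> T) \<circ> T) \<longleftrightarrow> C"
    unfolding C_def by (rule op_le_iff_norm_le[OF cinner_proj_range_self cinner_dual_gram_self])
  then have ii: "op_le (T \<circ> inv (adj T \<circ> T) \<circ> adj T) (adj T \<circ> inv (adj T \<circ> T) \<circ> T) \<longleftrightarrow> C"
    by (simp only: gram_proj_eq)
  have iv: "hyponormal_on (range (cauchy_dual T)) (cauchy_dual T) \<longleftrightarrow> C"
    by (simp add: C_def hyponormal_cauchy_dual_iff)
  show ?thesis
    using i ii iii iv concave_imp_weakly_concave by blast
qed

end
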